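(* Let $D$ be an essential domain admitting an essential representation $\mathcal V$ such that the set $\{\mathfrak m_V\cap D: V\in\mathcal V\}$ of centers in $D$ of the valuation domains in $\mathcal V$ (where $\mathfrak m_V$ is the maximal ideal of $V$) is closed in $\operatorname{Spec}(D)$ with respect to the constructible topology. Then $D$ is a PvMD.
   Context: All rings are commutative with identity. For an integral domain $D$ with quotient field $K$ and a nonzero fractional ideal $I$, set $(D:I)=\{x\in K: xI\subseteq D\}$, $I^v=(D:(D:I))$, $I^t=\bigcup\{J^v: J\subseteq I \text{ finitely generated}\}$; $I$ is a $t$-ideal if $I=(0)$ or $I=I^t$; a $t$-maximal ideal is a $t$-ideal maximal among proper $t$-ideals. $D$ is a PvMD if $D_{\mathfrak m}$ is a valuation domain for every $t$-maximal ideal $\mathfrak m$. A valuation overring of $D$ is essential if it equals $D_{\mathfrak p}$ for some prime $\mathfrak p$; an essential representation of $D$ is a family of essential valuation overrings of $D$ with intersection $D$; $D$ is essential if it has one. The constructible topology on $\operatorname{Spec}(A)$ is the coarsest topology in which every $D(f)=\{\mathfrak p:f\notin\mathfrak p\}$ is clopen. *)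

theory Defs
  imports "HOL-Analysis.Analysis"
begin

text \<open>An integral domain D is represented as a subring of a field 'a whose quotient field is
  the whole field 'a (so K = UNIV).\<close>

definition subring :: "'a::field set \<Rightarrow> bool" where
  "subring D \<longleftrightarrow> 0 \<in> D \<and> 1 \<in> D \<and> (\<forall>x\<in>D. \<forall>y\<in>D. x + y \<in> D \<and> x - y \<in> D \<and> x * y \<in> D)"

definition domain_with_qf :: "'a::field set \<Rightarrow> bool" where
  "domain_with_qf D \<longleftrightarrow> subring D \<and> (\<forall>x. \<exists>a\<in>D. \<exists>b\<in>D. b \<noteq> 0 \<and> x = a / b)"

definition ideal_of :: "'a::field set \<Rightarrow> 'a set \<Rightarrow> bool" where
  "ideal_of D I \<longleftrightarrow> I \<subseteq> D \<and> 0 \<in> I \<and> (\<forall>x\<in>I. \<forall>y\<in>I. x + y \<in> I) \<and> (\<forall>d\<in>D. \<forall>x\<in>I. d * x \<in> I)"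

definition prime_ideal_of :: "'a::field set \<Rightarrow> 'a set \<Rightarrow> bool" where
  "prime_ideal_of D P \<longleftrightarrow> ideal_of D P \<and> P \<noteq> D \<and>
     (\<forall>a\<in>D. \<forall>b\<in>D. a * b \<in> P \<longrightarrow> a \<in> P \<or> b \<in> P)"

definition Spec :: "'a::field set \<Rightarrow> 'a set set" where
  "Spec D = {P. prime_ideal_of D P}"

definition basic_open :: "'a::field set \<Rightarrow> 'a \<Rightarrow> 'a set set" where
  "basic_open D f = {P \<in> Spec D. f \<notin> P}"

definition constructible_topology :: "'a::field set \<Rightarrow> 'a set topology" where
  "constructible_topology D =
     topology_generated_by ({basic_open D f | f. f \<in> D} \<union> {Spec D - basic_open D f | f. f \<in> D})"

definition colon :: "'a::field set \<Rightarrow> 'a set \<Rightarrow> 'a set" where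
  "colon D I = {x. \<forall>y\<in>I. x * y \<in> D}"

definition vclos :: "'a::field set \<Rightarrow> 'a set \<Rightarrow> 'a set" where
  "vclos D I = colon D (colon D I)"

definition fg_ideal :: "'a::field set \<Rightarrow> 'a set \<Rightarrow> 'a set" where
  "fg_ideal D F = {(\<Sum>f\<in>F. c f * f) | c. \<forall>f\<in>F. c f \<in> D}"

definition tclos :: "'a::field set \<Rightarrow> 'a set \<Rightarrow> 'a set" where
  "tclos D I = \<Union>{vclos D (fg_ideal D F) | F. finite F \<and> fg_ideal D F \<subseteq> I}"

definition t_ideal :: "'a::field set \<Rightarrow> 'a set \<Rightarrow> bool" where
  "t_ideal D I \<longleftrightarrow> I = {0} \<or> I = tclos D I"

definition t_maximal :: "'a::field set \<Rightarrow> 'a set \<Rightarrow> bool" where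
  "t_maximal D M \<longleftrightarrow> ideal_of D M \<and> M \<noteq> D \<and> t_ideal D M \<and>
     (\<forall>J. ideal_of D J \<and> J \<noteq> D \<and> t_ideal D J \<and> M \<subseteq> J \<longrightarrow> J = M)"

definition localization :: "'a::field set \<Rightarrow> 'a set \<Rightarrow> 'a set" where
  "localization D P = {a / s | a s. a \<in> D \<and> s \<in> D \<and> s \<notin> P}"

definition valuation_domain :: "'a::field set \<Rightarrow> bool" where
  "valuation_domain V \<longleftrightarrow> subring V \<and> (\<forall>x. x \<noteq> 0 \<longrightarrow> x \<in> V \<or> inverse x \<in> V)"

definition PvMD :: "'a::field set \<Rightarrow> bool" where
  "PvMD D \<longleftrightarrow> (\<forall>M. t_maximal D M \<longrightarrow> valuation_domain (localization D M))"

definition essential_valuation_overring :: "'a::field set \<Rightarrow> 'a set \<Rightarrow> bool" where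
  "essential_valuation_overring D V \<longleftrightarrow> valuation_domain V \<and> D \<subseteq> V \<and>
     (\<exists>P \<in> Spec D. V = localization D P)"

definition essential_representation :: "'a::field set \<Rightarrow> 'a set set \<Rightarrow> bool" where
  "essential_representation D \<V> \<longleftrightarrow> (\<forall>V\<in>\<V>. essential_valuation_overring D V) \<and> \<Inter>\<V> = D"

definition essential_domain :: "'a::field set \<Rightarrow> bool" where
  "essential_domain D \<longleftrightarrow> (\<exists>\<V>. essential_representation D \<V>)"

definition max_ideal :: "'a::field set \<Rightarrow> 'a set" where
  "max_ideal V = {x \<in> V. x = 0 \<or> inverse x \<notin> V}"

definition center :: "'a::field set \<Rightarrow> 'a set \<Rightarrow> 'a set" where
  "center D V = max_ideal V \<inter> D"

end

theory Submission
  imports Defs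
begin

text \<open>
  Let \<open>X = {P \<in> Spec D. D\<^sub>P \<in> \<V>}\<close> be the set of centers of the essential
  representation \<open>\<V>\<close>, and let \<open>M\<close> be a nonzero t-maximal ideal (for \<open>M = (0)\<close> the
  localization is the whole quotient field).
  (1) If a finite set \<open>F \<subseteq> D\<close> lies in no member of \<open>X\<close>, then \<open>(D : F) \<subseteq> \<Inter>\<V> = D\<close>, so
      \<open>1 \<in> F\<^sup>v\<close>; since \<open>M\<close> is a proper t-ideal this is impossible for \<open>F \<subseteq> M\<close>.
      Hence every finite subset of \<open>M\<close> lies in some member of \<open>X\<close>.
  (2) A constructibly closed subset of \<open>Spec D\<close> is compact: via an ultrafilter on \<open>X\<close>
      we produce its limit prime, which lies in \<open>X\<close> by closedness.  So some \<open>P \<in> X\<close>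
      contains all of \<open>M\<close>.
  (3) If \<open>D\<^sub>P\<close> is a valuation domain then \<open>P\<close> is a t-ideal; by t-maximality \<open>P = M\<close>,
      so \<open>D\<^sub>M = D\<^sub>P\<close> is a valuation domain.
\<close>

lemma subring_sum:
  assumes "subring D" "finite S" "\<forall>i\<in>S. g i \<in> D"
  shows "sum g S \<in> D"
  using assms(2,3) by (induction S rule: finite_induct) (use assms(1) in \<open>auto simp: subring_def\<close>)

lemma subring_prod:
  assumes "subring D" "finite S" "\<forall>i\<in>S. g i \<in> D"
  shows "prod g S \<in> D"
  using assms(2,3) by (induction S rule: finite_induct) (use assms(1) in \<open>auto simp: subring_def\<close>)

lemma ideal_sum:
  assumes "ideal_of D I" "finite S" "\<forall>i\<in>S. g i \<in> I"
  shows "sum g S \<in> I"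
  using assms(2,3) by (induction S rule: finite_induct) (use assms(1) in \<open>auto simp: ideal_of_def\<close>)

lemma ideal_one_eq:
  assumes "ideal_of D I" "1 \<in> I"
  shows "I = D"
proof -
  have "d \<in> I" if "d \<in> D" for d
    using assms that unfolding ideal_of_def by (metis mult.right_neutral)
  then show ?thesis using assms(1) unfolding ideal_of_def by auto
qed

lemma prime_one_notin:
  assumes "prime_ideal_of D P"
  shows "1 \<notin> P"
  using assms ideal_one_eq unfolding prime_ideal_of_def by blast

lemma prime_zero_in: "prime_ideal_of D P \<Longrightarrow> 0 \<in> P"
  by (simp add: prime_ideal_of_def ideal_of_def)

lemma prime_prod_notin:
  assumes "prime_ideal_of D P" "subring D" "finite S" "\<forall>i\<in>S. g i \<in> D \<and> g i \<notin> P"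
  shows "prod g S \<in> D \<and> prod g S \<notin> P"
  using assms(3,4)
proof (induction S rule: finite_induct)
  case empty then show ?case using prime_one_notin[OF assms(1)] assms(2) by (simp add: subring_def)
next
  case (insert x F)
  then have "prod g F \<in> D" "prod g F \<notin> P" "g x \<in> D" "g x \<notin> P" by auto
  then show ?case using insert(1,2) assms(1,2) unfolding prime_ideal_of_def subring_def by auto
qed

lemma generator_in_fg_ideal:
  assumes "subring D" "finite F" "f \<in> F"
  shows "f \<in> fg_ideal D F"
proof -
  define c where "c = (\<lambda>g. if g = f then 1 else (0::'a))"
  have "(\<Sum>g\<in>F. c g * g) = (\<Sum>g\<in>F. if f = g then g else 0)"
    unfolding c_def by (rule sum.cong) auto
  also have "\<dots> = f" using assms(2,3) by simp
  finally have "f = (\<Sum>g\<in>F. c g * g)" by simp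
  moreover have "\<forall>g\<in>F. c g \<in> D" using assms(1) unfolding c_def by (simp add: subring_def)
  ultimately show ?thesis unfolding fg_ideal_def by blast
qed

lemma colon_fg_ideal_intro:
  assumes "subring D" "finite F" "\<forall>f\<in>F. z * f \<in> D"
  shows "z \<in> colon D (fg_ideal D F)"
  unfolding colon_def fg_ideal_def
proof safe
  fix c assume c: "\<forall>f\<in>F. c f \<in> D"
  have "z * (\<Sum>f\<in>F. c f * f) = (\<Sum>f\<in>F. c f * (z * f))"
    by (simp add: sum_distrib_left mult.left_commute)
  also have "\<dots> \<in> D" using subring_sum[OF assms(1,2)] c assms(1,3) by (simp add: subring_def)
  finally show "z * (\<Sum>f\<in>F. c f * f) \<in> D" .
qed

lemma fg_ideal_subset:
  assumes "ideal_of D I" "finite F" "F \<subseteq> I"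
  shows "fg_ideal D F \<subseteq> I"
  unfolding fg_ideal_def
proof safe
  fix c assume "\<forall>f\<in>F. c f \<in> D"
  then have "\<forall>f\<in>F. c f * f \<in> I" using assms(1,3) unfolding ideal_of_def by blast
  then show "(\<Sum>f\<in>F. c f * f) \<in> I" by (rule ideal_sum[OF assms(1,2)])
qed

lemma subset_vclos: "I \<subseteq> vclos D I"
  unfolding vclos_def colon_def by (auto simp: mult.commute)

lemma vclos_mult_in:
  "y \<in> vclos D I \<Longrightarrow> z \<in> colon D I \<Longrightarrow> y * z \<in> D"
  unfolding vclos_def colon_def by blast

lemma localizationI: "a \<in> D \<Longrightarrow> s \<in> D \<Longrightarrow> s \<notin> P \<Longrightarrow> a / s \<in> localization D P"
  unfolding localization_def by blast

lemma subset_localization: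
  assumes "subring D" "prime_ideal_of D P"
  shows "D \<subseteq> localization D P"
proof
  fix x assume "x \<in> D"
  then have "x / 1 \<in> localization D P"
    using assms prime_one_notin by (intro localizationI) (auto simp: subring_def)
  then show "x \<in> localization D P" by simp
qed

lemma center_localization:
  assumes sD: "subring D" and P: "prime_ideal_of D P"
  shows "center D (localization D P) = P"
proof (rule set_eqI, rule iffI)
  fix x assume "x \<in> center D (localization D P)"
  then have x: "x \<in> D" "x = 0 \<or> inverse x \<notin> localization D P"
    unfolding center_def max_ideal_def by auto
  show "x \<in> P"
  proof (rule ccontr)
    assume "x \<notin> P"
    then have "x \<noteq> 0" "1 / x \<in> localization D P"
      using prime_zero_in[OF P] x(1) sD by (auto intro: localizationI simp: subring_def)
    then show False using x by (simp add: divide_inverse)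
  qed
next
  fix x assume xP: "x \<in> P"
  have Pm: "\<And>d. d \<in> D \<Longrightarrow> d * x \<in> P" and xD: "x \<in> D"
    using P xP unfolding prime_ideal_of_def ideal_of_def by auto
  have "inverse x \<notin> localization D P" if "x \<noteq> 0"
  proof
    assume "inverse x \<in> localization D P"
    then obtain a s where as: "inverse x = a / s" "a \<in> D" "s \<in> D" "s \<notin> P"
      unfolding localization_def by blast
    then have "s \<noteq> 0" using prime_zero_in[OF P] by auto
    then have "s = a * x" using as(1) that by (simp add: field_simps)
    then show False using Pm[OF as(2)] as(4) by simp
  qed
  then show "x \<in> center D (localization D P)"
    unfolding center_def max_ideal_def using xD subset_localization[OF sD P] by auto
qed

lemma centers_eq:
  assumes sD: "subring D" and rep: "essential_representation D \<V>"
  shows "{center D V | V. V \<in> \<V>} = {P \<in> Spec D. localization D P \<in> \<V>}"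
proof -
  have "\<And>V. V \<in> \<V> \<Longrightarrow> \<exists>P\<in>Spec D. V = localization D P"
    using rep unfolding essential_representation_def essential_valuation_overring_def by blast
  then show ?thesis
    using center_localization[OF sD] unfolding Spec_def by fastforce
qed

text \<open>Localizing at \<open>(0)\<close> yields the quotient field, a trivial valuation domain.\<close>
lemma valuation_localization_zero:
  assumes "domain_with_qf D"
  shows "valuation_domain (localization D {0})"
proof -
  have "x \<in> localization D {0}" for x
  proof -
    obtain a b where "a \<in> D" "b \<in> D" "b \<noteq> 0" "x = a / b"
      using assms unfolding domain_with_qf_def by blast
    then show ?thesis by (auto intro: localizationI)
  qed
  then have "localization D {0} = UNIV" by auto
  then show ?thesis by (simp add: valuation_domain_def subring_def)
qed

subsection \<open>A prime with valuation localization is a t-ideal\<close>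

lemma valuation_min_divisor:
  assumes V: "valuation_domain V" and S: "finite S" "S \<noteq> {}" "0 \<notin> S"
  shows "\<exists>x\<in>S. \<forall>f\<in>S. f / x \<in> V"
  using S
proof (induction S rule: finite_ne_induct)
  case (singleton a)
  then show ?case using V by (simp add: valuation_domain_def subring_def)
next
  case (insert a F)
  then obtain x where x: "x \<in> F" "\<forall>f\<in>F. f / x \<in> V" by auto
  have a0: "a \<noteq> 0" "x \<noteq> 0" using insert x by auto
  have sV: "subring V" using V by (simp add: valuation_domain_def)
  show ?case
  proof (cases "a / x \<in> V")
    case True then show ?thesis using x by auto
  next
    case False
    moreover have "a / x \<noteq> 0" using a0 by simp
    ultimately have "inverse (a / x) \<in> V" using V unfolding valuation_domain_def by blast
    then have xa: "x / a \<in> V" by simp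
    have "f / a \<in> V" if "f \<in> F" for f
    proof -
      have "(f / x) * (x / a) \<in> V" using x that xa sV unfolding subring_def by blast
      then show ?thesis using a0 by simp
    qed
    moreover have "a / a \<in> V" using a0 sV by (simp add: subring_def)
    ultimately show ?thesis by (intro bexI[of _ a]) auto
  qed
qed

lemma common_denominator:
  assumes sD: "subring D" and P: "prime_ideal_of D P" and F: "finite F"
    and frac: "\<forall>f\<in>F. f / x \<in> localization D P"
  obtains \<sigma> where "\<sigma> \<in> D" "\<sigma> \<notin> P" "\<sigma> / x \<in> colon D (fg_ideal D F)"
proof -
  have "\<forall>f\<in>F. \<exists>p. f / x = fst p / snd p \<and> fst p \<in> D \<and> snd p \<in> D \<and> snd p \<notin> P"
    using frac unfolding localization_def by force
  then obtain p where p: "\<forall>f\<in>F. f / x = fst (p f) / snd (p f) \<and> fst (p f) \<in> D \<and>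
      snd (p f) \<in> D \<and> snd (p f) \<notin> P"
    by (rule bchoice[elim_format]) blast
  define a s where "a = (\<lambda>f. fst (p f))" and "s = (\<lambda>f. snd (p f))"
  have as: "\<And>f. f \<in> F \<Longrightarrow> f / x = a f / s f \<and> a f \<in> D \<and> s f \<in> D \<and> s f \<notin> P"
    using p unfolding a_def s_def by blast
  define \<sigma> where "\<sigma> = prod s F"
  have \<sigma>: "\<sigma> \<in> D" "\<sigma> \<notin> P" using prime_prod_notin[OF P sD F] as unfolding \<sigma>_def by auto
  have "\<sigma> / x * f \<in> D" if f: "f \<in> F" for f
  proof -
    have "s f \<noteq> 0" using as[OF f] prime_zero_in[OF P] by auto
    moreover have "\<sigma> = s f * prod s (F - {f})" unfolding \<sigma>_def using F f by (simp add: prod.remove)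
    moreover have "\<sigma> / x * f = \<sigma> * (f / x)" by simp
    ultimately have "\<sigma> / x * f = prod s (F - {f}) * a f"
      using conjunct1[OF as[OF f]] by simp
    moreover have "prod s (F - {f}) \<in> D" by (rule subring_prod[OF sD]) (use F as in auto)
    ultimately show ?thesis using as[OF f] sD by (simp add: subring_def)
  qed
  then have "\<sigma> / x \<in> colon D (fg_ideal D F)" by (intro colon_fg_ideal_intro[OF sD F]) auto
  then show thesis using that \<sigma> by blast
qed

lemma vclos_fg_subset_prime:
  assumes sD: "subring D" and P: "prime_ideal_of D P" and P0: "P \<noteq> {0}"
    and V: "valuation_domain (localization D P)"
    and F: "finite F" "F \<subseteq> P"
  shows "vclos D (fg_ideal D F) \<subseteq> P"
proof
  fix y assume y: "y \<in> vclos D (fg_ideal D F)"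
  have Pm: "\<And>d x. d \<in> D \<Longrightarrow> x \<in> P \<Longrightarrow> d * x \<in> P" and PD: "P \<subseteq> D"
    using P unfolding prime_ideal_of_def ideal_of_def by auto
  show "y \<in> P"
  proof (cases "F - {0} = {}")
    case True
    obtain p where p: "p \<in> P" "p \<noteq> 0" using P0 prime_zero_in[OF P] by blast
    show ?thesis
    proof (rule ccontr)
      assume "y \<notin> P"
      then have y0: "y \<noteq> 0" using prime_zero_in[OF P] by auto
      have "inverse p / y \<in> colon D (fg_ideal D F)"
        by (rule colon_fg_ideal_intro[OF sD F(1)]) (use True sD in \<open>auto simp: subring_def\<close>)
      then have "inverse p \<in> D" using vclos_mult_in[OF y] y0 by fastforce
      then have "1 \<in> P" using Pm[OF _ p(1)] p(2) by fastforce
      then show False using prime_one_notin[OF P] by simp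
    qed
  next
    case False
    obtain x where x: "x \<in> F - {0}" "\<forall>f\<in>F - {0}. f / x \<in> localization D P"
      using valuation_min_divisor[OF V _ False] F(1) by auto
    have "0 \<in> localization D P" using subset_localization[OF sD P] sD by (auto simp: subring_def)
    then have "\<forall>f\<in>F. f / x \<in> localization D P" using x(2) by (metis DiffI div_0 singletonD)
    then obtain \<sigma> where \<sigma>: "\<sigma> \<in> D" "\<sigma> \<notin> P" "\<sigma> / x \<in> colon D (fg_ideal D F)"
      by (rule common_denominator[OF sD P F(1)])
    have "1 \<in> colon D (fg_ideal D F)"
      by (rule colon_fg_ideal_intro[OF sD F(1)]) (use F PD in auto)
    then have yD: "y \<in> D" using vclos_mult_in[OF y] by fastforce
    have "y * (\<sigma> / x) * x \<in> P" using Pm vclos_mult_in[OF y \<sigma>(3)] x F(2) by blast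
    then have "y * \<sigma> \<in> P" using x by simp
    then show "y \<in> P" using P yD \<sigma> unfolding prime_ideal_of_def by blast
  qed
qed

lemma t_ideal_of_valuation_localization:
  assumes sD: "subring D" and P: "prime_ideal_of D P" and V: "valuation_domain (localization D P)"
  shows "t_ideal D P"
proof (cases "P = {0}")
  case False
  have Pi: "ideal_of D P" using P by (simp add: prime_ideal_of_def)
  have "P \<subseteq> tclos D P"
  proof
    fix p assume p: "p \<in> P"
    have "fg_ideal D {p} \<subseteq> P" using fg_ideal_subset[OF Pi] p by auto
    moreover have "p \<in> vclos D (fg_ideal D {p})"
      using subset_vclos generator_in_fg_ideal[OF sD] by blast
    ultimately show "p \<in> tclos D P" unfolding tclos_def by blast
  qed
  moreover have "tclos D P \<subseteq> P"
    using vclos_fg_subset_prime[OF sD P False V] generator_in_fg_ideal[OF sD]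
    unfolding tclos_def by blast
  ultimately show ?thesis by (simp add: t_ideal_def)
qed (simp add: t_ideal_def)

subsection \<open>Compactness of constructibly closed sets via ultrafilters\<close>

definition fip :: "'b set \<Rightarrow> 'b set set \<Rightarrow> bool" where
  "fip X U \<longleftrightarrow> (\<forall>G. finite G \<and> G \<subseteq> U \<longrightarrow> X \<inter> \<Inter>G \<noteq> {})"

text \<open>An ultrafilter on \<open>X\<close>, its members taken as arbitrary sets (only their traces on \<open>X\<close>
  matter).\<close>
definition ultrafilter_on :: "'b set \<Rightarrow> 'b set set \<Rightarrow> bool" where
  "ultrafilter_on X U \<longleftrightarrow> X \<in> U \<and> (\<forall>B\<in>U. X \<inter> B \<noteq> {}) \<and>
     (\<forall>B C. B \<in> U \<longrightarrow> C \<in> U \<longrightarrow> B \<inter> C \<in> U) \<and>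
     (\<forall>B C. B \<in> U \<longrightarrow> B \<subseteq> C \<longrightarrow> C \<in> U) \<and>
     (\<forall>B C. B \<union> C \<in> U \<longrightarrow> B \<in> U \<or> C \<in> U)"

lemma fip_insert:
  assumes "fip X U" "\<forall>G. finite G \<and> G \<subseteq> U \<longrightarrow> X \<inter> A \<inter> \<Inter>G \<noteq> {}"
  shows "fip X (insert A U)"
  unfolding fip_def
proof (intro allI impI)
  fix G assume G: "finite G \<and> G \<subseteq> insert A U"
  then have "X \<inter> A \<inter> \<Inter>(G - {A}) \<noteq> {}" using assms(2) by auto
  moreover have "X \<inter> A \<inter> \<Inter>(G - {A}) \<subseteq> X \<inter> \<Inter>G" by auto
  ultimately show "X \<inter> \<Inter>G \<noteq> {}" by auto
qed

lemma maximal_fip_exists: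
  assumes "fip X A"
  obtains U where "A \<subseteq> U" "fip X U" "\<And>Y. fip X Y \<Longrightarrow> U \<subseteq> Y \<Longrightarrow> Y = U"
proof -
  let ?F = "{U. A \<subseteq> U \<and> fip X U}"
  have "\<exists>M\<in>?F. \<forall>Y\<in>?F. M \<subseteq> Y \<longrightarrow> Y = M"
  proof (rule subset_Zorn_nonempty)
    show "?F \<noteq> {}" using assms by blast
  next
    fix C assume C: "C \<noteq> {}" "subset.chain ?F C"
    have CF: "C \<subseteq> ?F" using C(2) by (simp add: subset.chain_def)
    have "fip X (\<Union>C)" unfolding fip_def
    proof (intro allI impI)
      fix G assume G: "finite G \<and> G \<subseteq> \<Union>C"
      obtain B where "B \<in> C" "G \<subseteq> B"
        using finite_subset_Union_chain[OF conjunct1[OF G] conjunct2[OF G] C(1,2)] by metis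
      then show "X \<inter> \<Inter>G \<noteq> {}" using G CF unfolding fip_def by auto
    qed
    then show "\<Union>C \<in> ?F" using C(1) CF by auto
  qed
  then show thesis using that by auto
qed

lemma ultrafilter_exists:
  assumes "fip X A"
  obtains U where "A \<subseteq> U" "ultrafilter_on X U"
proof -
  obtain U where U: "A \<subseteq> U" "fip X U" and max: "\<And>Y. fip X Y \<Longrightarrow> U \<subseteq> Y \<Longrightarrow> Y = U"
    using maximal_fip_exists[OF assms] by blast
  have fipU: "X \<inter> \<Inter>G \<noteq> {}" if "finite G" "G \<subseteq> U" for G
    using U(2) that unfolding fip_def by simp
  have good: "B \<in> U" if "\<And>G. finite G \<Longrightarrow> G \<subseteq> U \<Longrightarrow> X \<inter> B \<inter> \<Inter>G \<noteq> {}" for B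
    using max[OF fip_insert[OF U(2)]] that by blast
  have "X \<in> U" by (rule good) (use fipU in auto)
  moreover have "X \<inter> B \<noteq> {}" if "B \<in> U" for B
    using fipU[of "{B}"] that by simp
  moreover have "B \<inter> C \<in> U" if "B \<in> U" "C \<in> U" for B C
  proof (rule good)
    fix G assume "finite G" "G \<subseteq> U"
    then have "X \<inter> \<Inter>(insert B (insert C G)) \<noteq> {}" using that by (intro fipU) auto
    then show "X \<inter> (B \<inter> C) \<inter> \<Inter>G \<noteq> {}" by (simp add: Int_assoc)
  qed
  moreover have "C \<in> U" if "B \<in> U" "B \<subseteq> C" for B C
  proof (rule good)
    fix G assume "finite G" "G \<subseteq> U"
    then have "X \<inter> \<Inter>(insert B G) \<noteq> {}" using that by (intro fipU) auto
    then show "X \<inter> C \<inter> \<Inter>G \<noteq> {}" using that(2) by auto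
  qed
  moreover have "B \<in> U \<or> C \<in> U" if BC: "B \<union> C \<in> U" for B C
  proof (rule ccontr)
    assume "\<not> (B \<in> U \<or> C \<in> U)"
    then obtain G1 G2 where G: "finite G1" "G1 \<subseteq> U" "X \<inter> B \<inter> \<Inter>G1 = {}"
      "finite G2" "G2 \<subseteq> U" "X \<inter> C \<inter> \<Inter>G2 = {}"
      using good by metis
    then have "X \<inter> \<Inter>(insert (B \<union> C) (G1 \<union> G2)) \<noteq> {}" using BC by (intro fipU) auto
    moreover have "X \<inter> \<Inter>(insert (B \<union> C) (G1 \<union> G2)) \<subseteq> (X \<inter> B \<inter> \<Inter>G1) \<union> (X \<inter> C \<inter> \<Inter>G2)"
      by auto
    ultimately show False using G by auto
  qed
  ultimately have "ultrafilter_on X U" unfolding ultrafilter_on_def by blast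
  then show thesis using that U(1) by blast
qed

lemma ultrafilter_onD:
  assumes "ultrafilter_on X U"
  shows ultrafilter_on_top: "X \<in> U"
    and ultrafilter_on_meets: "B \<in> U \<Longrightarrow> X \<inter> B \<noteq> {}"
    and ultrafilter_on_Int: "B \<in> U \<Longrightarrow> C \<in> U \<Longrightarrow> B \<inter> C \<in> U"
    and ultrafilter_on_mono: "B \<in> U \<Longrightarrow> B \<subseteq> C \<Longrightarrow> C \<in> U"
    and ultrafilter_on_Un: "B \<union> C \<in> U \<Longrightarrow> B \<in> U \<or> C \<in> U"
  using assms unfolding ultrafilter_on_def by blast+

lemma ultrafilter_on_trace_mono:
  assumes "ultrafilter_on X U" "B \<in> U" "X \<inter> B \<subseteq> C"
  shows "C \<in> U"
  by (meson assms ultrafilter_onD(1,3,4))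

definition ultra_limit :: "'a::field set \<Rightarrow> 'a set set set \<Rightarrow> 'a set" where
  "ultra_limit D U = {x \<in> D. {P. x \<in> P} \<in> U}"

lemma ultra_limit_prime:
  assumes sD: "subring D" and XS: "X \<subseteq> Spec D" and U: "ultrafilter_on X U"
  shows "prime_ideal_of D (ultra_limit D U)"
proof -
  let ?Q = "ultra_limit D U"
  have XP: "\<And>P. P \<in> X \<Longrightarrow> prime_ideal_of D P" using XS unfolding Spec_def by auto
  note Une = ultrafilter_on_meets[OF U] and Usplit = ultrafilter_on_Un[OF U]
    and XIU = ultrafilter_on_trace_mono[OF U]
  have "X \<subseteq> {P. 0 \<in> P}" using XP prime_zero_in by auto
  then have "0 \<in> ?Q"
    using ultrafilter_on_mono[OF U ultrafilter_on_top[OF U]] sD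
    unfolding ultra_limit_def subring_def by auto
  moreover have "x + y \<in> ?Q" if "x \<in> ?Q" "y \<in> ?Q" for x y
  proof -
    have "X \<inter> ({P. x \<in> P} \<inter> {P. y \<in> P}) \<subseteq> {P. x + y \<in> P}"
      using XP unfolding prime_ideal_of_def ideal_of_def by auto
    moreover have "{P. x \<in> P} \<inter> {P. y \<in> P} \<in> U"
      using that ultrafilter_on_Int[OF U] unfolding ultra_limit_def by auto
    ultimately show ?thesis using XIU that sD unfolding ultra_limit_def subring_def by auto
  qed
  moreover have "d * x \<in> ?Q" if "d \<in> D" "x \<in> ?Q" for d x
  proof -
    have "X \<inter> {P. x \<in> P} \<subseteq> {P. d * x \<in> P}"
      using XP that(1) unfolding prime_ideal_of_def ideal_of_def by auto
    then show ?thesis using XIU that sD unfolding ultra_limit_def subring_def by auto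
  qed
  moreover have "?Q \<noteq> D"
  proof
    assume "?Q = D"
    then have "X \<inter> {P. 1 \<in> P} \<noteq> {}" using Une sD unfolding ultra_limit_def subring_def by auto
    then show False using XP prime_one_notin by blast
  qed
  moreover have "a \<in> ?Q \<or> b \<in> ?Q" if "a \<in> D" "b \<in> D" "a * b \<in> ?Q" for a b
  proof -
    have "X \<inter> {P. a * b \<in> P} \<subseteq> {P. a \<in> P} \<union> {P. b \<in> P}"
      using XP that(1,2) unfolding prime_ideal_of_def by auto
    then show ?thesis using XIU Usplit that unfolding ultra_limit_def by blast
  qed
  ultimately show ?thesis
    unfolding prime_ideal_of_def ideal_of_def ultra_limit_def by blast
qed

lemma ultra_limit_neighbourhoods:
  assumes sD: "subring D" and XS: "X \<subseteq> Spec D" and U: "ultrafilter_on X U"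
    and S: "S = {basic_open D f | f. f \<in> D} \<union> {Spec D - basic_open D f | f. f \<in> D}"
    and W: "generate_topology_on S W" "ultra_limit D U \<in> W"
  shows "W \<in> U"
  using W
proof (induction rule: generate_topology_on.induct)
  case (Int a b) then show ?case using ultrafilter_on_Int[OF U] by simp
next
  case (UN K)
  then obtain k where "k \<in> K" "ultra_limit D U \<in> k" by auto
  then show ?case using UN ultrafilter_on_mono[OF U] by blast
next
  case (Basis s)
  have QS: "ultra_limit D U \<in> Spec D" using ultra_limit_prime[OF sD XS U] by (simp add: Spec_def)
  note XU = ultrafilter_on_mono[OF U ultrafilter_on_top[OF U]]
    and XIU = ultrafilter_on_trace_mono[OF U] and Usplit = ultrafilter_on_Un[OF U]
  from Basis consider (opn) f where "f \<in> D" "s = basic_open D f"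
    | (cls) f where "f \<in> D" "s = Spec D - basic_open D f"
    unfolding S by auto
  then show ?case
  proof cases
    case opn
    then have "{P. f \<in> P} \<notin> U" using Basis unfolding basic_open_def ultra_limit_def by auto
    moreover have "{P. f \<in> P} \<union> basic_open D f \<in> U"
      using XS by (intro XU) (auto simp: basic_open_def)
    ultimately show ?thesis using Usplit opn by blast
  next
    case cls
    then have "{P. f \<in> P} \<in> U" using Basis QS unfolding basic_open_def ultra_limit_def by auto
    moreover have "X \<inter> {P. f \<in> P} \<subseteq> Spec D - basic_open D f"
      using XS unfolding basic_open_def by auto
    ultimately show ?thesis using cls XIU by simp
  qed
qed (simp)

lemma ultra_limit_in_closed:
  assumes sD: "subring D" and X: "closedin (constructible_topology D) X"
    and XS: "X \<subseteq> Spec D" and U: "ultrafilter_on X U"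
  shows "ultra_limit D U \<in> X"
proof (rule ccontr)
  assume QnX: "ultra_limit D U \<notin> X"
  define S where "S = {basic_open D f | f. f \<in> D} \<union> {Spec D - basic_open D f | f. f \<in> D}"
  let ?W = "topspace (topology_generated_by S) - X"
  have "generate_topology_on S ?W"
    using X unfolding closedin_def constructible_topology_def S_def[symmetric]
    by (simp add: openin_topology_generated_by_iff)
  moreover have "basic_open D 1 \<in> S" using sD unfolding S_def subring_def by auto
  moreover have "ultra_limit D U \<in> basic_open D 1"
    using ultra_limit_prime[OF sD XS U] prime_one_notin unfolding basic_open_def Spec_def by auto
  ultimately have "?W \<in> U" using ultra_limit_neighbourhoods[OF sD XS U S_def] QnX by auto
  then show False using ultrafilter_on_meets[OF U] by auto
qed

text \<open>Compactness in the form needed: if each finite part of \<open>M \<subseteq> D\<close> lies in a member of a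
  constructibly closed set \<open>X\<close> of primes, then all of \<open>M\<close> does.\<close>
lemma constructible_closed_contains:
  assumes sD: "subring D" and X: "closedin (constructible_topology D) X" and XS: "X \<subseteq> Spec D"
    and MD: "M \<subseteq> D" and fin: "\<And>F. finite F \<Longrightarrow> F \<subseteq> M \<Longrightarrow> \<exists>P\<in>X. F \<subseteq> P"
  shows "\<exists>P\<in>X. M \<subseteq> P"
proof -
  define \<A> where "\<A> = (\<lambda>F. {P. F \<subseteq> P}) ` {F. finite F \<and> F \<subseteq> M}"
  have "fip X \<A>" unfolding fip_def
  proof (intro allI impI)
    fix G assume "finite G \<and> G \<subseteq> \<A>"
    then have G: "finite G" "G \<subseteq> (\<lambda>F. {P. F \<subseteq> P}) ` {F. finite F \<and> F \<subseteq> M}"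
      unfolding \<A>_def by auto
    obtain C where C: "C \<subseteq> {F. finite F \<and> F \<subseteq> M}" "finite C" "G = (\<lambda>F. {P. F \<subseteq> P}) ` C"
      using finite_subset_image[OF G] by (elim exE conjE)
    have "\<exists>P\<in>X. \<Union>C \<subseteq> P" using C(1,2) by (intro fin) auto
    then obtain P where "P \<in> X" "\<Union>C \<subseteq> P" by (elim bexE)
    then have "P \<in> X \<inter> \<Inter>G" unfolding C(3) by blast
    then show "X \<inter> \<Inter>G \<noteq> {}" by blast
  qed
  then obtain U where U: "\<A> \<subseteq> U" "ultrafilter_on X U" by (rule ultrafilter_exists)
  have "{P. {m} \<subseteq> P} \<in> U" if "m \<in> M" for m using U(1) that unfolding \<A>_def by blast
  then have "M \<subseteq> ultra_limit D U" using MD unfolding ultra_limit_def by auto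
  then show ?thesis using ultra_limit_in_closed[OF sD X XS U(2)] by blast
qed

subsection \<open>Finite sets avoiding all centers\<close>

text \<open>If no center of \<open>\<V>\<close> contains the finite set \<open>F\<close>, then \<open>(D : F) \<subseteq> \<Inter>\<V> = D\<close>,
  i.e. \<open>F\<^sup>v = D\<close>.\<close>
lemma one_in_vclos_if_avoids_centers:
  assumes sD: "subring D" and int: "\<Inter>\<V> = D"
    and avoid: "\<And>V. V \<in> \<V> \<Longrightarrow> \<exists>P. prime_ideal_of D P \<and> V = localization D P \<and> \<not> F \<subseteq> P"
    and F: "finite F" "F \<subseteq> D"
  shows "1 \<in> vclos D (fg_ideal D F)"
  unfolding vclos_def colon_def
proof (intro CollectI ballI)
  fix z assume z: "z \<in> {x. \<forall>y\<in>fg_ideal D F. x * y \<in> D}"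
  have "z \<in> V" if V: "V \<in> \<V>" for V
  proof -
    obtain P where P: "prime_ideal_of D P" "V = localization D P" "\<not> F \<subseteq> P" using avoid[OF V] by blast
    then obtain f where f: "f \<in> F" "f \<notin> P" by auto
    then have "f \<noteq> 0" using prime_zero_in[OF P(1)] by auto
    moreover have "z * f \<in> D" using z generator_in_fg_ideal[OF sD F(1) f(1)] by blast
    ultimately have "(z * f) / f \<in> localization D P" using f F(2) by (intro localizationI) auto
    then show ?thesis using P(2) \<open>f \<noteq> 0\<close> by simp
  qed
  then show "1 * z \<in> D" using int by auto
qed

lemma one_notin_vclos_of_t_ideal:
  assumes M: "ideal_of D M" "M \<noteq> D" "t_ideal D M" "M \<noteq> {0}" and F: "finite F" "F \<subseteq> M"
  shows "1 \<notin> vclos D (fg_ideal D F)"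
proof
  assume "1 \<in> vclos D (fg_ideal D F)"
  then have "1 \<in> tclos D M" using fg_ideal_subset[OF M(1) F] F(1) unfolding tclos_def by blast
  then have "1 \<in> M" using M(3,4) unfolding t_ideal_def by simp
  then show False using ideal_one_eq[OF M(1)] M(2) by simp
qed

lemma t_ideal_finite_part_in_center:
  assumes sD: "subring D" and rep: "essential_representation D \<V>"
    and M: "ideal_of D M" "M \<noteq> D" "t_ideal D M" "M \<noteq> {0}" and F: "finite F" "F \<subseteq> M"
  shows "\<exists>P\<in>{P \<in> Spec D. localization D P \<in> \<V>}. F \<subseteq> P"
proof (rule ccontr)
  assume none: "\<not> (\<exists>P\<in>{P \<in> Spec D. localization D P \<in> \<V>}. F \<subseteq> P)"
  have avoid: "\<exists>P. prime_ideal_of D P \<and> V = localization D P \<and> \<not> F \<subseteq> P" if V: "V \<in> \<V>" for V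
  proof -
    obtain P where "P \<in> Spec D" "V = localization D P"
      using rep V unfolding essential_representation_def essential_valuation_overring_def by blast
    then show ?thesis using none V unfolding Spec_def by auto
  qed
  have "\<Inter>\<V> = D" using rep by (simp add: essential_representation_def)
  moreover have "F \<subseteq> D" using F(2) M(1) unfolding ideal_of_def by blast
  ultimately have "1 \<in> vclos D (fg_ideal D F)"
    using one_in_vclos_if_avoids_centers[OF sD _ avoid F(1)] by blast
  then show False using one_notin_vclos_of_t_ideal[OF M F] by simp
qed

lemma t_maximal_below_valuation_prime:
  assumes sD: "subring D" and M: "t_maximal D M" and P: "prime_ideal_of D P"
    and V: "valuation_domain (localization D P)" and MP: "M \<subseteq> P"
  shows "P = M"
  using M t_ideal_of_valuation_localization[OF sD P V] P MP
  unfolding t_maximal_def prime_ideal_of_def by blast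

theorem corollary2p5:
  fixes D :: "'a::field set" and \<V> :: "'a set set"
  assumes "domain_with_qf D"
    and "essential_domain D"
    and "essential_representation D \<V>"
    and "closedin (constructible_topology D) {center D V | V. V \<in> \<V>}"
  shows "PvMD D"
  unfolding PvMD_def
proof (intro allI impI)
  fix M assume tM: "t_maximal D M"
  then have M: "ideal_of D M" "M \<noteq> D" "t_ideal D M" and MD: "M \<subseteq> D"
    unfolding t_maximal_def ideal_of_def by auto
  have sD: "subring D" using assms(1) by (simp add: domain_with_qf_def)
  define X where "X = {P \<in> Spec D. localization D P \<in> \<V>}"
  have Xcl: "closedin (constructible_topology D) X"
    using assms(4) centers_eq[OF sD assms(3)] X_def by simp
  show "valuation_domain (localization D M)"
  proof (cases "M = {0}")
    case True then show ?thesis using valuation_localization_zero[OF assms(1)] by simp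
  next
    case False
    have "\<And>F. finite F \<Longrightarrow> F \<subseteq> M \<Longrightarrow> \<exists>P\<in>X. F \<subseteq> P"
      using t_ideal_finite_part_in_center[OF sD assms(3) M False] unfolding X_def .
    moreover have "X \<subseteq> Spec D" unfolding X_def by blast
    ultimately have "\<exists>P\<in>X. M \<subseteq> P" using constructible_closed_contains[OF sD Xcl _ MD] by blast
    then obtain P where P: "P \<in> X" "M \<subseteq> P" by (elim bexE)
    then have Pp: "prime_ideal_of D P" and Pv: "valuation_domain (localization D P)"
      using assms(3) unfolding X_def Spec_def essential_representation_def
        essential_valuation_overring_def by auto
    then show ?thesis using t_maximal_below_valuation_prime[OF sD tM Pp Pv P(2)] by simp
  qed
qed

end
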